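(* Let $\mathcal P$ be a compact set of $n\times n$ doubly stochastic matrices and let $P(1),P(2),P(3),\ldots$ be a sequence of matrices from $\mathcal P$. Suppose $j_1<j_2<\cdots$ is an infinite increasing sequence of indices such that each $P(j_r)$ is a Sarymsakov matrix and the set $\bigcup_{r\ge1}\{P(j_r)\}$ is compact. If there exists an integer $T$ such that $j_{r+1}-j_r\le T$ for all $r\ge1$, then $P(k)\cdots P(1)$ converges as $k\to\infty$ to a rank-one matrix $\mathbf 1c^T$ with $c_i\ge0$ and $\sum_i c_i=1$.
   Context: $\mathcal N=\{1,\ldots,n\}$. A matrix is stochastic if it is entrywise nonnegative with row sums $1$, and doubly stochastic if in addition its column sums are $1$. For stochastic $P$ and $\mathcal A\subseteq\mathcal N$, $F_P(\mathcal A)=\{j:\ p_{ij}>0\text{ for some } i\in\mathcal A\}$. A Sarymsakov matrix is a stochastic $P$ such that for any disjoint nonempty $\mathcal A,\tilde{\mathcal A}\subseteq\mathcal N$, either $F_P(\mathcal A)\cap F_P(\tilde{\mathcal A})\neq\emptyset$, or $F_P(\mathcal A)\cap F_P(\tilde{\mathcal A})=\emptyset$ and $|F_P(\mathcal A)\cup F_P(\tilde{\mathcal A})|>|\mathcal A\cup\tilde{\mathcal A}|$. $\mathbf 1$ is the all-ones column vector. *)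

theory Defs
  imports "HOL-Analysis.Analysis"
begin

text \<open>n x n matrices are modelled as real^'n^'n, with index set N = UNIV :: 'n set.\<close>

definition stochastic :: "real^'n^'n \<Rightarrow> bool" where
  "stochastic P \<longleftrightarrow> (\<forall>i j. P $ i $ j \<ge> 0) \<and> (\<forall>i. (\<Sum>j\<in>UNIV. P $ i $ j) = 1)"

definition doubly_stochastic :: "real^'n^'n \<Rightarrow> bool" where
  "doubly_stochastic P \<longleftrightarrow> stochastic P \<and> (\<forall>j. (\<Sum>i\<in>UNIV. P $ i $ j) = 1)"

definition F_of :: "real^'n^'n \<Rightarrow> 'n set \<Rightarrow> 'n set" where
  "F_of P A = {j. \<exists>i\<in>A. P $ i $ j > 0}"

definition sarymsakov :: "real^'n^'n \<Rightarrow> bool" where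
  "sarymsakov P \<longleftrightarrow> stochastic P \<and>
     (\<forall>A B. A \<noteq> {} \<and> B \<noteq> {} \<and> A \<inter> B = {} \<longrightarrow>
        (F_of P A \<inter> F_of P B \<noteq> {} \<or>
         (F_of P A \<inter> F_of P B = {} \<and> card (F_of P A \<union> F_of P B) > card (A \<union> B))))"

fun left_prod :: "(nat \<Rightarrow> real^'n^'n) \<Rightarrow> nat \<Rightarrow> real^'n^'n" where
  "left_prod P 0 = mat 1"
| "left_prod P (Suc k) = P (Suc k) ** left_prod P k"

end

theory Submission imports Defs begin

text \<open>
  A doubly stochastic matrix Q does not increase the Euclidean norm, and the loss
  norm y^2 - norm (Q y)^2 is the weighted variance of y over the rows of Q.  If it
  vanished for a non-constant y, then the rows whose mean is one value a of y and
  the columns where y equals a would form a block of Q of equal size, which the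
  Sarymsakov property forbids.  Hence a Sarymsakov matrix strictly contracts the
  hyperplane of vectors with zero sum, and by compactness uniformly so, with some
  factor lambda < 1.  Applied column by column to P(k)...P(1) - (1/n) 1 1^T, whose
  columns lie in that hyperplane, this shows that the Frobenius distance of the
  products to (1/n) 1 1^T never increases and shrinks by lambda at every Sarymsakov
  step; since there are infinitely many such steps, it tends to 0.
\<close>

lemma weighted_variance_identity:
  fixes q y :: "'a \<Rightarrow> real"
  assumes "finite J" "sum q J = 1"
  shows "(\<Sum>j\<in>J. q j * y j)^2 + (\<Sum>j\<in>J. q j * (y j - (\<Sum>k\<in>J. q k * y k))^2)
       = (\<Sum>j\<in>J. q j * (y j)^2)"
proof -
  define m where "m = (\<Sum>k\<in>J. q k * y k)"
  have "(\<Sum>j\<in>J. q j * (y j - m)^2) = (\<Sum>j\<in>J. q j * (y j)^2 - 2 * m * (q j * y j) + m^2 * q j)"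
    by (rule sum.cong) (auto simp: power2_eq_square algebra_simps)
  also have "\<dots> = (\<Sum>j\<in>J. q j * (y j)^2) - 2 * m * m + m^2"
    using assms by (simp add: sum.distrib sum_subtractf sum_distrib_left[symmetric] m_def)
  finally show ?thesis unfolding m_def[symmetric] by (simp add: power2_eq_square)
qed

lemma norm_vec_sq: "(norm (y :: real^'n))^2 = (\<Sum>i\<in>UNIV. (y $ i)^2)"
  unfolding power2_norm_eq_inner inner_vec_def by (simp add: power2_eq_square)

lemma doubly_stochastic_norm_sq_defect:
  fixes Q :: "real^'n^'n"
  assumes "doubly_stochastic Q"
  shows "(norm (Q *v y))^2 + (\<Sum>i\<in>UNIV. \<Sum>j\<in>UNIV. Q$i$j * (y$j - (Q *v y)$i)^2) = (norm y)^2"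
proof -
  have rows: "\<And>i. (\<Sum>j\<in>UNIV. Q$i$j) = 1" and cols: "\<And>j. (\<Sum>i\<in>UNIV. Q$i$j) = 1"
    using assms by (auto simp: doubly_stochastic_def stochastic_def)
  have "(norm (Q *v y))^2 + (\<Sum>i\<in>UNIV. \<Sum>j\<in>UNIV. Q$i$j * (y$j - (Q *v y)$i)^2)
      = (\<Sum>i\<in>UNIV. \<Sum>j\<in>UNIV. Q$i$j * (y$j)^2)"
    unfolding norm_vec_sq sum.distrib[symmetric] matrix_vector_mult_def vec_lambda_beta
    by (rule sum.cong[OF refl], rule weighted_variance_identity) (auto simp: rows)
  also have "\<dots> = (\<Sum>j\<in>UNIV. \<Sum>i\<in>UNIV. Q$i$j * (y$j)^2)" by (rule sum.swap)
  also have "\<dots> = (norm y)^2" by (simp add: norm_vec_sq sum_distrib_right[symmetric] cols)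
  finally show ?thesis .
qed

lemma doubly_stochastic_norm_mult_le:
  fixes Q :: "real^'n^'n"
  assumes "doubly_stochastic Q"
  shows "norm (Q *v y) \<le> norm y"
proof -
  have "\<And>i j. Q$i$j \<ge> 0" using assms by (auto simp: doubly_stochastic_def stochastic_def)
  hence "0 \<le> (\<Sum>i\<in>UNIV. \<Sum>j\<in>UNIV. Q$i$j * (y$j - (Q *v y)$i)^2)"
    by (intro sum_nonneg mult_nonneg_nonneg) auto
  with doubly_stochastic_norm_sq_defect[OF assms, of y] have "(norm (Q *v y))^2 \<le> (norm y)^2"
    by linarith
  thus ?thesis by (rule power2_le_imp_le) simp
qed

lemma sarymsakov_F_of_Compl:
  fixes Q :: "real^'n^'n"
  assumes "sarymsakov Q" "R \<noteq> {}" "R \<noteq> UNIV"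
  shows "F_of Q R \<inter> F_of Q (- R) \<noteq> {}"
proof -
  have "- R \<noteq> {}" using assms(3) by auto
  hence "F_of Q R \<inter> F_of Q (- R) \<noteq> {} \<or> card (F_of Q R \<union> F_of Q (- R)) > card (R \<union> - R)"
    using assms(1,2) unfolding sarymsakov_def
    by (elim conjE allE[where x = R] allE[where x = "- R"]) auto
  moreover have "card (F_of Q R \<union> F_of Q (- R)) \<le> card (R \<union> - R)"
    by (simp add: card_mono)
  ultimately show ?thesis by linarith
qed

lemma doubly_stochastic_card_eq:
  fixes Q :: "real^'n^'n"
  assumes "doubly_stochastic Q" "F_of Q R \<subseteq> C" "F_of Q (- R) \<subseteq> - C"
  shows "card R = card C"
proof -
  have nonneg: "\<And>i j. Q$i$j \<ge> 0" and rows: "\<And>i. (\<Sum>j\<in>UNIV. Q$i$j) = 1"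
    and cols: "\<And>j. (\<Sum>i\<in>UNIV. Q$i$j) = 1"
    using assms(1) by (auto simp: doubly_stochastic_def stochastic_def)
  have zero: "Q$i$j = 0" if "i \<in> R \<longleftrightarrow> j \<notin> C" for i j
    using that assms(2,3) nonneg[of i j] by (force simp: F_of_def)
  have "real (card R) = (\<Sum>i\<in>R. \<Sum>j\<in>UNIV. Q$i$j)" by (simp add: rows)
  also have "\<dots> = (\<Sum>i\<in>R. \<Sum>j\<in>C. Q$i$j)"
    by (rule sum.cong[OF refl], rule sum.mono_neutral_right) (auto intro: zero)
  also have "\<dots> = (\<Sum>j\<in>C. \<Sum>i\<in>R. Q$i$j)" by (rule sum.swap)
  also have "\<dots> = (\<Sum>j\<in>C. \<Sum>i\<in>UNIV. Q$i$j)"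
    by (rule sum.cong[OF refl], rule sum.mono_neutral_left) (auto intro: zero)
  also have "\<dots> = real (card C)" by (simp add: cols)
  finally show ?thesis by simp
qed

lemma sarymsakov_norm_mult_less:
  fixes Q :: "real^'n^'n"
  assumes ds: "doubly_stochastic Q" and sy: "sarymsakov Q"
    and sum0: "(\<Sum>i\<in>UNIV. y$i) = 0" and "y \<noteq> 0"
  shows "norm (Q *v y) < norm y"
proof (rule ccontr)
  assume "\<not> ?thesis"
  with doubly_stochastic_norm_mult_le[OF ds, of y]
  have "(\<Sum>i\<in>UNIV. \<Sum>j\<in>UNIV. Q$i$j * (y$j - (Q *v y)$i)^2) = 0"
    using doubly_stochastic_norm_sq_defect[OF ds, of y] by simp
  moreover have nonneg: "\<And>i j. Q$i$j \<ge> 0" using ds by (auto simp: doubly_stochastic_def stochastic_def)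
  ultimately have "\<forall>i j. Q$i$j * (y$j - (Q *v y)$i)^2 = 0"
    by (simp add: sum_nonneg_eq_0_iff sum_nonneg)
  hence level: "y$j = (Q *v y)$i" if "Q$i$j > 0" for i j
    using that by (metis less_irrefl mult_eq_0_iff power_eq_0_iff right_minus_eq)
  obtain j0 where "y$j0 \<noteq> 0" using \<open>y \<noteq> 0\<close> by (metis vec_eq_iff zero_index)
  define C where "C = {j. y$j = y$j0}"
  define R where "R = {i. (Q *v y)$i = y$j0}"
  have "F_of Q R \<subseteq> C" "F_of Q (- R) \<subseteq> - C"
    using level by (auto simp: F_of_def C_def R_def)
  hence disjoint: "F_of Q R \<inter> F_of Q (- R) = {}" and cardRC: "card R = card C"
    using doubly_stochastic_card_eq[OF ds] by blast+
  have "C \<noteq> {}" by (auto simp: C_def)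
  hence "R \<noteq> {}" using cardRC by (metis card.empty card_0_eq finite)
  have "C \<noteq> UNIV"
  proof
    assume "C = UNIV"
    have "(\<Sum>i\<in>UNIV. y$i) = (\<Sum>i\<in>(UNIV :: 'n set). y$j0)"
      by (rule sum.cong[OF refl]) (use \<open>C = UNIV\<close> in \<open>auto simp: C_def set_eq_iff\<close>)
    with sum0 \<open>y$j0 \<noteq> 0\<close> show False by simp
  qed
  hence "R \<noteq> UNIV" using cardRC card_eq_UNIV_imp_eq_UNIV[of C] by (metis finite)
  with sarymsakov_F_of_Compl[OF sy \<open>R \<noteq> {}\<close>] disjoint show False by blast
qed

lemma compact_sarymsakov_uniform_contraction:
  fixes K :: "(real^'n^'n) set"
  assumes "compact K" and K_sarymsakov: "\<And>Q. Q \<in> K \<Longrightarrow> doubly_stochastic Q \<and> sarymsakov Q"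
  obtains l where "0 \<le> l" "l < 1"
    "\<And>Q y. Q \<in> K \<Longrightarrow> (\<Sum>i\<in>UNIV. y$i) = 0 \<Longrightarrow> norm (Q *v y) \<le> l * norm y"
proof -
  define S where "S = {y :: real^'n. (\<Sum>i\<in>UNIV. y$i) = 0 \<and> norm y = 1}"
  have "compact S" unfolding S_def compact_eq_bounded_closed bounded_iff
    by (intro conjI closed_Collect_conj closed_Collect_eq continuous_intros) auto
  \<comment> \<open>0 keeps V nonempty when K \<times> S is empty (S is empty for n = 1).\<close>
  define V where "V = insert 0 ((\<lambda>(Q, y). norm (Q *v y)) ` (K \<times> S))"
  have "continuous_on (K \<times> S) (\<lambda>(Q, y). norm (Q *v y))"
    unfolding case_prod_beta matrix_vector_mult_def by (intro continuous_intros)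
  hence "compact V"
    unfolding V_def using \<open>compact K\<close> \<open>compact S\<close>
    by (intro compact_insert compact_continuous_image compact_Times)
  then obtain l where "l \<in> V" and l_max: "\<And>v. v \<in> V \<Longrightarrow> v \<le> l"
    by (metis compact_attains_sup insert_not_empty V_def)
  show thesis
  proof
    show "0 \<le> l" using l_max[of 0] by (simp add: V_def)
  next
    from \<open>l \<in> V\<close> consider "l = 0" | Q y where "Q \<in> K" "y \<in> S" "l = norm (Q *v y)"
      by (auto simp: V_def)
    thus "l < 1"
    proof cases
      case 2
      hence "norm (Q *v y) < norm y"
        using K_sarymsakov by (intro sarymsakov_norm_mult_less) (auto simp: S_def)
      with 2 show ?thesis by (simp add: S_def)
    qed simp
  next
    fix Q and y :: "real^'n"
    assume "Q \<in> K" and sum0: "(\<Sum>i\<in>UNIV. y$i) = 0"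
    show "norm (Q *v y) \<le> l * norm y"
    proof (cases "y = 0")
      case False
      define z where "z = (1 / norm y) *\<^sub>R y"
      have "z \<in> S" using sum0 False by (simp add: S_def z_def sum_divide_distrib[symmetric])
      hence "norm (Q *v z) \<le> l" using \<open>Q \<in> K\<close> by (intro l_max) (force simp: V_def)
      moreover have "norm (Q *v y) = norm y * norm (Q *v z)"
        using False by (simp add: z_def matrix_vector_mult_scaleR)
      ultimately show ?thesis by (metis mult.commute mult_left_mono norm_ge_zero)
    qed (use l_max[of 0] in \<open>simp add: V_def\<close>)
  qed
qed

lemma norm_sq_matrix_columns:
  "(norm (X :: real^'p^'m))^2 = (\<Sum>l\<in>UNIV. (norm (column l X))^2)"
proof -
  have "(norm X)^2 = (\<Sum>i\<in>UNIV. \<Sum>l\<in>UNIV. X$i$l * X$i$l)"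
    by (simp add: power2_norm_eq_inner inner_vec_def)
  also have "\<dots> = (\<Sum>l\<in>UNIV. \<Sum>i\<in>UNIV. X$i$l * X$i$l)" by (rule sum.swap)
  also have "\<dots> = (\<Sum>l\<in>UNIV. (norm (column l X))^2)"
    by (simp add: power2_norm_eq_inner inner_vec_def column_def)
  finally show ?thesis .
qed

lemma column_matrix_mult: "column l (Q ** X) = Q *v column l X"
  by (simp add: vec_eq_iff column_def matrix_matrix_mult_def matrix_vector_mult_def)

lemma norm_matrix_mult_le_columnwise:
  fixes Q :: "real^'n^'m" and X :: "real^'p^'n"
  assumes "0 \<le> c" "\<And>l. norm (Q *v column l X) \<le> c * norm (column l X)"
  shows "norm (Q ** X) \<le> c * norm X"
proof -
  have "(norm (Q ** X))^2 = (\<Sum>l\<in>UNIV. (norm (Q *v column l X))^2)"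
    by (simp add: norm_sq_matrix_columns column_matrix_mult)
  also have "\<dots> \<le> (\<Sum>l\<in>UNIV. (c * norm (column l X))^2)"
    by (intro sum_mono power_mono assms) simp
  also have "\<dots> = (c * norm X)^2"
    by (simp add: power_mult_distrib norm_sq_matrix_columns sum_distrib_left)
  finally show ?thesis by (rule power2_le_imp_le) (simp add: assms(1))
qed

lemma stochastic_mult_diff_rank_one:
  fixes Q :: "real^'n^'n"
  assumes "stochastic Q"
  shows "Q ** (A - (\<chi> i l. c $ l)) = Q ** A - (\<chi> i l. c $ l)"
proof -
  have "(\<Sum>k\<in>UNIV. Q$i$k * c$l) = c$l" for i l
    using assms by (simp add: stochastic_def flip: sum_distrib_right)
  hence "Q ** (\<chi> i l. c $ l) = (\<chi> i l. c $ l)"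
    by (simp add: vec_eq_iff matrix_matrix_mult_def)
  moreover have "Q ** (A - B) = Q ** A - Q ** B" for B
    by (simp add: vec_eq_iff matrix_matrix_mult_def right_diff_distrib sum_subtractf)
  ultimately show ?thesis by simp
qed

lemma column_sum_matrix_mult:
  fixes Q :: "real^'n^'m" and X :: "real^'p^'n"
  assumes "\<And>k. (\<Sum>i\<in>UNIV. Q$i$k) = 1"
  shows "(\<Sum>i\<in>UNIV. (Q ** X)$i$l) = (\<Sum>k\<in>UNIV. X$k$l)"
proof -
  have "(\<Sum>i\<in>UNIV. (Q ** X)$i$l) = (\<Sum>i\<in>UNIV. \<Sum>k\<in>UNIV. Q$i$k * X$k$l)"
    by (simp add: matrix_matrix_mult_def)
  also have "\<dots> = (\<Sum>k\<in>UNIV. \<Sum>i\<in>UNIV. Q$i$k * X$k$l)" by (rule sum.swap)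
  also have "\<dots> = (\<Sum>k\<in>UNIV. X$k$l)" by (simp add: sum_distrib_right[symmetric] assms)
  finally show ?thesis .
qed

lemma column_sum_left_prod:
  assumes "\<And>k. k \<ge> 1 \<Longrightarrow> doubly_stochastic (P k)"
  shows "(\<Sum>i\<in>UNIV. left_prod P k $ i $ l) = 1"
proof (induction k)
  case 0
  show ?case by (simp add: mat_def)
next
  case (Suc k)
  have "\<And>j. (\<Sum>i\<in>UNIV. P (Suc k) $ i $ j) = 1"
    using assms[of "Suc k"] by (simp add: doubly_stochastic_def)
  with Suc show ?case by (simp add: column_sum_matrix_mult)
qed

definition uniform_vec :: "real^'n" where
  "uniform_vec = (\<chi> l. 1 / real CARD('n))"

lemma norm_left_prod_minus_uniform_Suc_le:
  fixes P :: "nat \<Rightarrow> real^'n^'n"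
  assumes ds: "\<And>k. k \<ge> 1 \<Longrightarrow> doubly_stochastic (P k)" and "0 \<le> a"
    and "\<And>y. (\<Sum>i\<in>UNIV. y$i) = 0 \<Longrightarrow> norm (P (Suc k) *v y) \<le> a * norm y"
  shows "norm (left_prod P (Suc k) - (\<chi> i l. uniform_vec $ l))
       \<le> a * norm (left_prod P k - (\<chi> i l. uniform_vec $ l))"
proof -
  let ?D = "left_prod P k - (\<chi> i l. uniform_vec $ l)"
  have "(\<Sum>i\<in>UNIV. column l ?D $ i) = 0" for l
    using column_sum_left_prod[OF ds] by (simp add: column_def uniform_vec_def sum_subtractf)
  hence "norm (P (Suc k) ** ?D) \<le> a * norm ?D"
    by (intro norm_matrix_mult_le_columnwise assms(2,3))
  moreover have "left_prod P (Suc k) - (\<chi> i l. uniform_vec $ l) = P (Suc k) ** ?D"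
    using stochastic_mult_diff_rank_one[of "P (Suc k)" "left_prod P k" uniform_vec] ds[of "Suc k"]
    by (simp add: doubly_stochastic_def)
  ultimately show ?thesis by simp
qed

lemma decseq_tendsto_0_if_contracts_infinitely_often:
  fixes d :: "nat \<Rightarrow> real" and s :: "nat \<Rightarrow> nat"
  assumes "decseq d" "\<And>k. 0 \<le> d k" "strict_mono s" "lam < 1"
    "\<And>r. d (Suc (s r)) \<le> lam * d (s r)"
  shows "d \<longlonglongrightarrow> 0"
proof -
  obtain L where L: "d \<longlonglongrightarrow> L"
    by (rule decseq_convergent[OF assms(1), of 0]) (use assms(2) in auto)
  have "strict_mono (\<lambda>r. Suc (s r))" using assms(3) by (simp add: strict_mono_def)
  from LIMSEQ_subseq_LIMSEQ[OF L this] have "(\<lambda>r. d (Suc (s r))) \<longlonglongrightarrow> L"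
    by (simp add: comp_def)
  moreover from LIMSEQ_subseq_LIMSEQ[OF L assms(3)] have "(\<lambda>r. d (s r)) \<longlonglongrightarrow> L"
    by (simp add: comp_def)
  hence "(\<lambda>r. lam * d (s r)) \<longlonglongrightarrow> lam * L" by (rule tendsto_mult_left)
  ultimately have "L \<le> lam * L" by (rule LIMSEQ_le) (use assms(5) in auto)
  moreover have "0 \<le> L" by (rule LIMSEQ_le_const[OF L]) (use assms(2) in auto)
  ultimately have "L = 0" using assms(4) by (auto simp: mult_le_cancel_right1)
  with L show ?thesis by simp
qed

theorem corollary2:
  fixes \<P> :: "(real^'n^'n) set" and P :: "nat \<Rightarrow> real^'n^'n"
    and j :: "nat \<Rightarrow> nat" and T :: nat
  assumes "compact \<P>"
    and "\<forall>Q\<in>\<P>. doubly_stochastic Q"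
    and "\<forall>k\<ge>1. P k \<in> \<P>"
    and "strict_mono j" and "j 0 \<ge> 1"
    and "\<forall>r. sarymsakov (P (j r))"
    and "compact (\<Union>r. {P (j r)})"
    and "\<forall>r. j (Suc r) - j r \<le> T"
  shows "\<exists>c :: real^'n. (\<forall>i. c $ i \<ge> 0) \<and> (\<Sum>i\<in>UNIV. c $ i) = 1 \<and>
           (\<lambda>k. left_prod P k) \<longlonglongrightarrow> (\<chi> i l. c $ l)"
proof -
  define d where "d k = norm (left_prod P k - (\<chi> i l. uniform_vec $ l))" for k
  have ds: "doubly_stochastic (P k)" if "k \<ge> 1" for k using assms(2,3) that by blast
  have j_pos: "1 \<le> j r" for r using assms(5) strict_mono_leD[OF assms(4), of 0 r] by simp
  have K_sarymsakov: "doubly_stochastic Q \<and> sarymsakov Q" if "Q \<in> (\<Union>r. {P (j r)})" for Q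
  proof -
    from that obtain r where "Q = P (j r)" by blast
    thus ?thesis using ds[OF j_pos[of r]] assms(6) by simp
  qed
  obtain lam where "0 \<le> lam" "lam < 1" and contract: "\<And>Q y. Q \<in> (\<Union>r. {P (j r)}) \<Longrightarrow>
      (\<Sum>i\<in>UNIV. y$i) = 0 \<Longrightarrow> norm (Q *v y) \<le> lam * norm y"
    using compact_sarymsakov_uniform_contraction[OF assms(7) K_sarymsakov] by metis
  have "decseq d"
  proof (rule decseq_SucI)
    fix k
    show "d (Suc k) \<le> d k" unfolding d_def
      using norm_left_prod_minus_uniform_Suc_le[of P, OF ds, where a = 1 and k = k]
        doubly_stochastic_norm_mult_le[OF ds[of "Suc k"]] by simp
  qed
  moreover have "strict_mono (\<lambda>r. j r - 1)"
  proof (rule strict_monoI)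
    fix r r' :: nat
    assume "r < r'"
    hence "j r < j r'" using assms(4) by (simp add: strict_mono_less)
    thus "j r - 1 < j r' - 1" using j_pos[of r] by simp
  qed
  moreover have "d (Suc (j r - 1)) \<le> lam * d (j r - 1)" for r
  proof -
    have "Suc (j r - 1) = j r" using j_pos[of r] by simp
    thus ?thesis unfolding d_def using contract[of "P (j r)"]
      by (intro norm_left_prod_minus_uniform_Suc_le[of P, OF ds \<open>0 \<le> lam\<close>]) auto
  qed
  ultimately have "d \<longlonglongrightarrow> 0"
    using \<open>lam < 1\<close> by (intro decseq_tendsto_0_if_contracts_infinitely_often) (auto simp: d_def)
  hence "(\<lambda>k. left_prod P k) \<longlonglongrightarrow> (\<chi> i l. uniform_vec $ l)"
    unfolding d_def tendsto_norm_zero_iff LIM_zero_iff .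
  moreover have "\<forall>i. uniform_vec $ i \<ge> 0" "(\<Sum>i\<in>UNIV. uniform_vec $ i) = 1"
    by (simp_all add: uniform_vec_def)
  ultimately show ?thesis by blast
qed

end
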